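(* Let $X$ be a non-negative absolutely continuous random variable with CDF $F$ and PDF $f$ (the common distribution of the identically distributed component lifetimes of a coherent system), and let $T$ be the system lifetime, with CDF $F_T(x)=q(F(x))$ and PDF $f_T(x)=q'(F(x))f(x)$, where $q$ is the distortion function. Let $0<\alpha<\infty$, $\alpha\ne1$, $\beta>0$, put $\psi_\alpha(u)=f_T^\alpha(F_T^{-1}(u))$, $\phi_\alpha(u)=f^\alpha(F^{-1}(u))$ for $0\le u\le1$, and $$\xi_{1,\alpha}=\Big(\inf_{u\in(0,1)}\frac{\psi_\alpha(q(u))}{\phi_\alpha(u)}\Big)^{\beta-1},\qquad \xi_{2,\alpha}=\Big(\sup_{u\in(0,1)}\frac{\psi_\alpha(q(u))}{\phi_\alpha(u)}\Big)^{\beta-1}.$$ Then (A) $\xi_{1,\alpha}R^\alpha_\beta(X)\le R^\alpha_\beta(T)\le \xi_{2,\alpha}R^\alpha_\beta(X)$ for $\{\alpha>1,\beta\le1\}$ or $\{0<\alpha<1,\beta\ge1\}$; (B) $\xi_{1,\alpha}R^\alpha_\beta(X)\ge R^\alpha_\beta(T)\ge \xi_{2,\alpha}R^\alpha_\beta(X)$ for $\{\alpha>1,\beta\ge1\}$ or $\{0<\alpha<1,\beta\le1\}$.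
   Context: For a non-negative absolutely continuous random variable $Z$ with PDF $h$, the Rényi information generating function is $R^\alpha_\beta(Z)=\frac{1}{1-\alpha}\left(\int_0^\infty h^\alpha(x)\,dx\right)^{\beta-1}$; all integrals are assumed finite and the infimum and supremum are assumed finite and positive. A distortion function is a continuous increasing (differentiable) function $q:[0,1]\to[0,1]$ with $q(0)=0$, $q(1)=1$. Quantile functions are $F^{-1}(u)=\inf\{x:F(x)\ge u\}$. *)

theory Defs
  imports "HOL-Probability.Probability"
begin

definition distortion :: "(real \<Rightarrow> real) \<Rightarrow> (real \<Rightarrow> real) \<Rightarrow> bool" where
  "distortion q q' \<longleftrightarrow>
     continuous_on {0..1} q \<and> mono_on {0..1} q \<and> q ` {0..1} \<subseteq> {0..1} \<and>
     q 0 = 0 \<and> q 1 = 1 \<and>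
     (\<forall>u\<in>{0..1}. (q has_real_derivative q' u) (at u within {0..1}))"

definition quantile :: "(real \<Rightarrow> real) \<Rightarrow> real \<Rightarrow> real" where
  "quantile F u = Inf {x. u \<le> F x}"

definition renyi_igf :: "real \<Rightarrow> real \<Rightarrow> (real \<Rightarrow> real) \<Rightarrow> real" where
  "renyi_igf \<alpha> \<beta> h = 1 / (1 - \<alpha>) * (LBINT x:{0..}. h x powr \<alpha>) powr (\<beta> - 1)"

end

(*
  At a point x where F increases strictly on both sides, u = F x satisfies F^{-1}(u) = x and,
  once q is known to be strictly increasing, F_T^{-1}(q u) = x as well, so the ratio
  psi_alpha(q u) / phi_alpha(u) is exactly f_T(x)^alpha / f(x)^alpha.  Such points carry all the
  mass of X, hence c f^alpha <= f_T^alpha <= C f^alpha almost everywhere on {f > 0}, with c and C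
  the infimum and supremum of the ratio.  Integrating and raising to the power beta - 1, whose
  monotonicity together with the sign of 1/(1 - alpha) decides the direction, gives (A) and (B).

  Strict monotonicity of q is not assumed but forced by the positive infimum: at a point t where
  q increases strictly from the left the ratio equals q'(t)^alpha, so q' >= c^(1/alpha) there,
  and this rules out any flat piece of q.
*)

theory Submission
  imports Defs
begin

lemma has_real_derivative_zero_if_constant_on:
  assumes deriv: "(q has_real_derivative D) (at m within S)"
    and "T \<subseteq> S" "m \<in> T" and const: "\<And>t. t \<in> T \<Longrightarrow> q t = q m"
    and nontrivial: "at m within T \<noteq> bot"
  shows "D = 0"
proof -
  have "(q has_real_derivative D) (at m within T)"
    using deriv \<open>T \<subseteq> S\<close> by (rule DERIV_subset)
  moreover have "(q has_real_derivative 0) (at m within T)"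
    by (rule has_field_derivative_transform_within[of "\<lambda>_. q m" 0 m T 1])
      (auto simp: \<open>m \<in> T\<close> dest: const)
  ultimately show ?thesis
    using nontrivial by (rule has_field_derivative_unique)
qed

lemma has_real_derivative_ge_if_growth_ge:
  fixes g :: "real \<Rightarrow> real"
  assumes deriv: "(g has_real_derivative D) (at a within {a..b})" and "a < b"
    and growth: "\<And>s. a < s \<Longrightarrow> s < b \<Longrightarrow> k * (s - a) \<le> g s - g a"
  shows "k \<le> D"
proof (rule ccontr)
  assume "\<not> k \<le> D"
  have "((\<lambda>x. g x - k * x) has_real_derivative D - k) (at a within {a..b})"
    using deriv by (auto intro!: derivative_eq_intros)
  from has_real_derivative_neg_dec_right[OF this] obtain d where "0 < d"
    and drop: "\<And>h. 0 < h \<Longrightarrow> a + h \<in> {a..b} \<Longrightarrow> h < d \<Longrightarrow> g (a + h) - k * (a + h) < g a - k * a"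
    using \<open>\<not> k \<le> D\<close> by auto
  define h where "h = min (d / 2) ((b - a) / 2)"
  have "h \<le> d / 2" "h \<le> (b - a) / 2"
    unfolding h_def by (rule min.cobounded1, rule min.cobounded2)
  moreover have "0 < h"
    using \<open>0 < d\<close> \<open>a < b\<close> by (simp add: h_def)
  ultimately have h: "0 < h" "h < d" "a + h < b"
    using \<open>0 < d\<close> by auto
  then have "g (a + h) - k * (a + h) < g a - k * a"
    by (intro drop) auto
  moreover have "k * h \<le> g (a + h) - g a"
    using growth[of "a + h"] h by simp
  ultimately show False
    by (simp add: algebra_simps)
qed

lemma growth_ge_if_deriv_ge:
  fixes g :: "real \<Rightarrow> real"
  assumes "a \<le> b" and cont: "continuous_on {a..b} g"
    and deriv: "\<And>x. a < x \<Longrightarrow> x < b \<Longrightarrow> (g has_real_derivative g' x) (at x)"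
    and deriv_ge: "\<And>x. a < x \<Longrightarrow> x < b \<Longrightarrow> k \<le> g' x"
  shows "k * (b - a) \<le> g b - g a"
proof -
  have "g a - k * a \<le> g b - k * b"
  proof (rule DERIV_nonneg_imp_increasing_open[of a b "\<lambda>x. g x - k * x"])
    fix x assume x: "a < x" "x < b"
    have "((\<lambda>x. g x - k * x) has_real_derivative g' x - k) (at x)"
      using deriv[OF x] by (auto intro!: derivative_eq_intros)
    then show "\<exists>y. ((\<lambda>x. g x - k * x) has_real_derivative y) (at x) \<and> 0 \<le> y"
      using deriv_ge[OF x] by auto
  qed (use \<open>a \<le> b\<close> cont in \<open>auto intro!: continuous_intros\<close>)
  then show ?thesis
    by (simp add: algebra_simps)
qed

section \<open>Distortion functions without flat pieces\<close>

lemma distortion_le: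
  "distortion q q' \<Longrightarrow> 0 \<le> a \<Longrightarrow> a \<le> b \<Longrightarrow> b \<le> 1 \<Longrightarrow> q a \<le> q b"
  unfolding distortion_def by (auto simp: mono_on_def)

lemma distortion_range:
  "distortion q q' \<Longrightarrow> 0 \<le> t \<Longrightarrow> t \<le> 1 \<Longrightarrow> 0 \<le> q t \<and> q t \<le> 1"
  unfolding distortion_def by (auto simp: image_subset_iff)

lemma distortion_has_real_derivative_at:
  "distortion q q' \<Longrightarrow> 0 < t \<Longrightarrow> t < 1 \<Longrightarrow> (q has_real_derivative q' t) (at t)"
  unfolding distortion_def using at_within_Icc_at[of 0 t 1]
  by (metis atLeastAtMost_iff less_eq_real_def)

lemma distortion_deriv_nonneg:
  assumes "distortion q q'" "0 < t" "t < 1"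
  shows "0 \<le> q' t"
  by (rule mono_on_imp_deriv_nonneg[of "{0..1}" q])
    (use assms distortion_has_real_derivative_at in \<open>auto simp: distortion_def\<close>)

context
  fixes q q' :: "real \<Rightarrow> real" and k :: real
  assumes q: "distortion q q'" and k: "0 < k"
    and deriv_ge: "\<And>t. 0 < t \<Longrightarrow> t < 1 \<Longrightarrow> (\<forall>s\<in>{0..<t}. q s < q t) \<Longrightarrow> k \<le> q' t"
begin

lemma distortion_less_if_pos:
  assumes st: "0 \<le> s" "s < t" "t \<le> 1" and pos: "0 < q t"
  shows "q s < q t"
proof (rule ccontr)
  assume "\<not> q s < q t"
  then have "q s = q t"
    using distortion_le[OF q, of s t] st by simp
  define L where "L = {x \<in> {0..1}. q x = q t}"
  have "closed L"
    unfolding L_def using q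
    by (intro continuous_closed_preimage_constant) (auto simp: distortion_def)
  moreover have "s \<in> L" and bdd: "bdd_below L"
    using \<open>q s = q t\<close> st by (auto simp: L_def)
  ultimately have "Inf L \<in> L" and "Inf L \<le> s"
    by (auto intro: closed_contains_Inf cInf_lower)
  define m where "m = Inf L"
  \<comment> \<open>q increases strictly up to m, so q' m is at least k, but q is flat on [m, t].\<close>
  have m: "0 < m" "m \<le> s" "q m = q t"
    using \<open>Inf L \<in> L\<close> \<open>Inf L \<le> s\<close> pos q
    by (auto simp: m_def L_def distortion_def le_less)
  have "\<forall>r\<in>{0..<m}. q r < q m"
  proof
    fix r assume r: "r \<in> {0..<m}"
    then have "r \<notin> L"
      using cInf_lower[OF _ bdd, of r] by (auto simp: m_def)
    then show "q r < q m"
      using distortion_le[OF q, of r m] r m st by (auto simp: L_def le_less)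
  qed
  then have "k \<le> q' m"
    using deriv_ge m st by simp
  moreover have "q' m = 0"
  proof (rule has_real_derivative_zero_if_constant_on)
    show "(q has_real_derivative q' m) (at m within {0..1})"
      using q m st by (simp add: distortion_def)
    show "q r = q m" if "r \<in> {m..t}" for r
      using that distortion_le[OF q, of m r] distortion_le[OF q, of r t] m st by auto
    show "at m within {m..t} \<noteq> bot"
      using m st by (simp add: at_within_Icc_at_right)
  qed (use m st in auto)
  ultimately show False
    using k by simp
qed

lemma distortion_deriv_ge_if_pos: "0 < x \<Longrightarrow> x < 1 \<Longrightarrow> 0 < q x \<Longrightarrow> k \<le> q' x"
  using deriv_ge distortion_less_if_pos by simp

lemma distortion_pos:
  assumes t: "0 < t" "t \<le> 1"
  shows "0 < q t"
proof (rule ccontr)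
  assume "\<not> 0 < q t"
  then have "q t = 0"
    using distortion_range[OF q, of t] t by simp
  define Z where "Z = {x \<in> {0..1}. q x = 0}"
  have "closed Z"
    unfolding Z_def using q
    by (intro continuous_closed_preimage_constant) (auto simp: distortion_def)
  moreover have "t \<in> Z" and bdd: "bdd_above Z"
    using \<open>q t = 0\<close> t by (auto simp: Z_def bdd_above_def)
  ultimately have "Sup Z \<in> Z" and "t \<le> Sup Z"
    by (auto intro: closed_contains_Sup cSup_upper)
  define b where "b = Sup Z"
  have b: "0 < b" "b < 1" "q b = 0"
    using \<open>Sup Z \<in> Z\<close> \<open>t \<le> Sup Z\<close> t q by (auto simp: b_def Z_def distortion_def le_less)
  have deriv_b: "(q has_real_derivative q' b) (at b within {0..1})"
    using q b by (simp add: distortion_def)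
  \<comment> \<open>q is flat to the left of b but grows at least at rate k to its right.\<close>
  have "q' b = 0"
  proof (rule has_real_derivative_zero_if_constant_on[OF deriv_b])
    show "q r = q b" if "r \<in> {0..b}" for r
      using that distortion_le[OF q, of r b] distortion_range[OF q, of r] b by auto
    show "at b within {0..b} \<noteq> bot"
      using b by (simp add: at_within_Icc_at_left)
  qed (use b in auto)
  moreover have "k \<le> q' b"
  proof (rule has_real_derivative_ge_if_growth_ge)
    show "(q has_real_derivative q' b) (at b within {b..1})"
      using deriv_b b by (auto intro: DERIV_subset)
    show "k * (s - b) \<le> q s - q b" if s: "b < s" "s < 1" for s
    proof (rule growth_ge_if_deriv_ge)
      show "continuous_on {b..s} q"
        using q b s by (auto simp: distortion_def intro: continuous_on_subset)
      show "(q has_real_derivative q' x) (at x)" if "b < x" "x < s" for x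
        using distortion_has_real_derivative_at[OF q, of x] that b s by simp
      show "k \<le> q' x" if x: "b < x" "x < s" for x
      proof (rule distortion_deriv_ge_if_pos)
        have "x \<notin> Z"
          using cSup_upper[OF _ bdd, of x] x by (auto simp: b_def)
        then show "0 < q x"
          using distortion_range[OF q, of x] x s b by (auto simp: Z_def le_less)
      qed (use x s b in auto)
    qed (use s in simp)
  qed (use b in simp)
  ultimately show False
    using k by simp
qed

lemma distortion_strict_mono_on: "strict_mono_on {0..1} q"
proof (rule strict_mono_onI)
  fix v w :: real assume "v \<in> {0..1}" "w \<in> {0..1}" "v < w"
  then show "q v < q w"
    using distortion_less_if_pos[of v w] distortion_pos[of w] by simp
qed

end

section \<open>Quantiles of continuous distributions\<close>

lemma quantile_eq_if_less_left:
  assumes "\<And>y. y < x \<Longrightarrow> F y < F x"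
  shows "quantile F (F x) = x"
  unfolding quantile_def
  by (rule cInf_eq_minimum) (use assms in \<open>auto simp flip: not_less\<close>)

lemma quantile_comp_eq:
  assumes mono: "mono_on {0..1} q" and F: "\<And>x. F x \<in> {0..1}" and t: "t \<in> {0..1}"
    and less: "\<And>s. s \<in> {0..<t} \<Longrightarrow> q s < q t"
  shows "quantile (\<lambda>x. q (F x)) (q t) = quantile F t"
proof -
  have "q t \<le> q (F y) \<longleftrightarrow> t \<le> F y" for y
    using F[of y] t less[of "F y"] mono_onD[OF mono, of t "F y"] by (auto simp: not_le[symmetric])
  then show ?thesis
    by (simp add: quantile_def)
qed

context real_distribution
begin

lemma continuous_on_cdf:
  assumes "\<And>x. measure M {x} = 0"
  shows "continuous_on UNIV (cdf M)"
  using isCont_cdf assms by (simp add: continuous_at_imp_continuous_on)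

lemma cdf_quantile:
  assumes atoms: "\<And>x. measure M {x} = 0" and u: "0 < u" "u < 1"
  shows "cdf M (quantile (cdf M) u) = u"
proof -
  define A where "A = {x. u \<le> cdf M x}"
  have "eventually (\<lambda>x. u < cdf M x) at_top"
    using cdf_lim_at_top_prob u by (intro order_tendstoD) auto
  then have "A \<noteq> {}"
    by (auto simp: A_def eventually_at_top_linorder intro: less_imp_le)
  have "eventually (\<lambda>x. cdf M x < u) at_bot"
    using cdf_lim_at_bot u by (intro order_tendstoD) auto
  then obtain b where b: "\<And>x. x \<le> b \<Longrightarrow> cdf M x < u"
    by (auto simp: eventually_at_bot_linorder)
  then have below: "b < x" if "x \<in> A" for x
    using that by (force simp: A_def not_le[symmetric])
  then have bdd: "bdd_below A"
    by (auto simp: bdd_below_def intro: less_imp_le)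
  have "closed A"
    unfolding A_def using continuous_on_cdf[OF atoms]
    by (intro closed_Collect_le) (auto intro: continuous_on_const)
  then have "Inf A \<in> A"
    using \<open>A \<noteq> {}\<close> bdd by (rule closed_contains_Inf[rotated 2])
  then obtain x where x: "b \<le> x" "x \<le> Inf A" "cdf M x = u"
    using IVT'[of "cdf M" b u "Inf A"] b[of b] below continuous_on_cdf[OF atoms]
    by (fastforce simp: A_def intro: continuous_on_subset)
  then have "Inf A \<le> x"
    by (intro cInf_lower bdd) (simp add: A_def)
  then show ?thesis
    using x by (simp add: quantile_def A_def)
qed

lemma AE_cdf_less_right_of:
  assumes atoms: "\<And>x. measure M {x} = 0"
  shows "AE x in M. r < x \<longrightarrow> x \<le> r + real n \<longrightarrow> cdf M r < cdf M x"
proof -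
  define K where "K = {r..r + real n} \<inter> {x. cdf M x \<le> cdf M r}"
  have "closed {x. cdf M x \<le> cdf M r}"
    using continuous_on_cdf[OF atoms] by (intro closed_Collect_le) (auto intro: continuous_on_const)
  then have "compact K"
    unfolding K_def by (intro compact_Int_closed) auto
  moreover have "r \<in> K"
    by (simp add: K_def)
  ultimately obtain s where s: "s \<in> K" and s_max: "\<And>y. y \<in> K \<Longrightarrow> y \<le> s"
    using compact_attains_sup[of K] by blast
  have "r \<le> s" "cdf M s \<le> cdf M r"
    using s by (auto simp: K_def)
  then have "measure M {r<..s} = 0"
    using cdf_diff_eq[of r s] cdf_nondecreasing[of r s] by (cases "r < s") auto
  then have "AE x in M. x \<notin> {r<..s}"
    by (intro AE_not_in) (simp add: null_sets_def emeasure_eq_measure)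
  then show ?thesis
  proof eventually_elim
    case (elim x)
    show ?case
    proof (intro impI)
      assume x: "r < x" "x \<le> r + real n"
      then have "x \<notin> K"
        using elim s_max[of x] by auto
      then show "cdf M r < cdf M x"
        using x by (auto simp: K_def)
    qed
  qed
qed

lemma AE_cdf_less_left_of:
  assumes atoms: "\<And>x. measure M {x} = 0"
  shows "AE x in M. r - real n \<le> x \<longrightarrow> x < r \<longrightarrow> cdf M x < cdf M r"
proof -
  define K where "K = {r - real n..r} \<inter> {x. cdf M r \<le> cdf M x}"
  have "closed {x. cdf M r \<le> cdf M x}"
    using continuous_on_cdf[OF atoms] by (intro closed_Collect_le) (auto intro: continuous_on_const)
  then have "compact K"
    unfolding K_def by (intro compact_Int_closed) auto
  moreover have "r \<in> K"
    by (simp add: K_def)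
  ultimately obtain m where m: "m \<in> K" and m_min: "\<And>y. y \<in> K \<Longrightarrow> m \<le> y"
    using compact_attains_inf[of K] by blast
  have "m \<le> r" "cdf M r \<le> cdf M m"
    using m by (auto simp: K_def)
  then have "measure M {m<..r} = 0"
    using cdf_diff_eq[of m r] cdf_nondecreasing[of m r] by (cases "m < r") auto
  then have "AE x in M. x \<notin> {m<..r}"
    by (intro AE_not_in) (simp add: null_sets_def emeasure_eq_measure)
  moreover have "AE x in M. x \<noteq> m"
    using AE_not_in[of "{m}"] atoms by (simp add: null_sets_def emeasure_eq_measure)
  ultimately show ?thesis
  proof eventually_elim
    case (elim x)
    show ?case
    proof (intro impI)
      assume x: "r - real n \<le> x" "x < r"
      then have "x \<notin> K"
        using elim m_min[of x] by auto
      then show "cdf M x < cdf M r"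
        using x by (auto simp: K_def)
    qed
  qed
qed

lemma AE_cdf_strict_at:
  assumes atoms: "\<And>x. measure M {x} = 0"
  shows "AE x in M. (\<forall>y<x. cdf M y < cdf M x) \<and> (\<forall>z>x. cdf M x < cdf M z)"
proof -
  have "AE x in M. \<forall>r\<in>\<rat>. \<forall>n.
      (r < x \<longrightarrow> x \<le> r + real n \<longrightarrow> cdf M r < cdf M x) \<and>
      (r - real n \<le> x \<longrightarrow> x < r \<longrightarrow> cdf M x < cdf M r)"
    using AE_cdf_less_right_of[OF atoms] AE_cdf_less_left_of[OF atoms]
    by (intro AE_ball_countable' countable_rat) (simp add: AE_all_countable)
  then show ?thesis
  proof eventually_elim
    case (elim x)
    have "cdf M y < cdf M x" if "y < x" for y
    proof -
      obtain r where r: "r \<in> \<rat>" "y < r" "r < x"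
        using Rats_dense_in_real[OF \<open>y < x\<close>] by blast
      have "x \<le> r + real (nat \<lceil>x - r\<rceil>)"
        by linarith
      then show ?thesis
        using elim r cdf_nondecreasing[of y r] by fastforce
    qed
    moreover have "cdf M x < cdf M z" if "x < z" for z
    proof -
      obtain r where r: "r \<in> \<rat>" "x < r" "r < z"
        using Rats_dense_in_real[OF \<open>x < z\<close>] by blast
      have "r - real (nat \<lceil>r - x\<rceil>) \<le> x"
        by linarith
      then show ?thesis
        using elim r cdf_nondecreasing[of r z] by fastforce
    qed
    ultimately show ?case
      by blast
  qed
qed

end

lemma (in prob_space) distributed_real_distribution:
  assumes "distributed M lborel X (\<lambda>x. ennreal (f x))"
  shows "real_distribution (distr M lborel X)"
  using prob_space_distr[OF distributed_measurable[OF assms]]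
  by (simp add: real_distribution_def real_distribution_axioms_def)

lemma distributed_measure_singleton:
  assumes X: "distributed M lborel X (\<lambda>x. ennreal (f x))"
  shows "measure (distr M lborel X) {x} = 0"
proof -
  have "AE y in lborel. y \<in> {x} \<longrightarrow> ennreal (f y) = 0"
    using AE_lborel_singleton[of x] by eventually_elim simp
  then have "{x} \<in> null_sets (density lborel (\<lambda>x. ennreal (f x)))"
    by (simp add: null_sets_density_iff[OF distributed_borel_measurable[OF X]])
  then show ?thesis
    by (simp add: distributed_distr_eq_density[OF X] measure_def null_setsD1)
qed

lemma (in prob_space) distributed_cdf_quantile:
  assumes "distributed M lborel X (\<lambda>x. ennreal (f x))" and "0 < u" "u < 1"
  shows "cdf (distr M lborel X) (quantile (cdf (distr M lborel X)) u) = u"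
proof -
  interpret X: real_distribution "distr M lborel X"
    using assms(1) by (rule distributed_real_distribution)
  show ?thesis
    using X.cdf_quantile[OF distributed_measure_singleton[OF assms(1)]] assms(2,3) .
qed

lemma (in prob_space) distributed_AE_cdf_strict_at:
  assumes X: "distributed M lborel X (\<lambda>x. ennreal (f x))"
  defines "F \<equiv> cdf (distr M lborel X)"
  shows "AE x in lborel. 0 < f x \<longrightarrow> (\<forall>y<x. F y < F x) \<and> (\<forall>z>x. F x < F z)"
proof -
  have "AE x in distr M lborel X. (\<forall>y<x. F y < F x) \<and> (\<forall>z>x. F x < F z)"
    unfolding F_def
    by (rule real_distribution.AE_cdf_strict_at)
      (use distributed_real_distribution[OF X] distributed_measure_singleton[OF X] in auto)
  then show ?thesis
    unfolding distributed_distr_eq_density[OF X] AE_density[OF distributed_borel_measurable[OF X]]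
    by simp
qed

section \<open>Bounds on the Renyi information generating function\<close>

lemma powr_mult_bounds:
  fixes a b c C p :: real
  assumes c: "0 < c" and a: "0 \<le> a" and lower: "c * a \<le> b" and upper: "b \<le> C * a"
  shows "0 \<le> p \<Longrightarrow> c powr p * a powr p \<le> b powr p \<and> b powr p \<le> C powr p * a powr p"
    and "p \<le> 0 \<Longrightarrow> b powr p \<le> c powr p * a powr p \<and> C powr p * a powr p \<le> b powr p"
proof -
  have "(0 \<le> p \<longrightarrow> (c * a) powr p \<le> b powr p \<and> b powr p \<le> (C * a) powr p) \<and>
      (p \<le> 0 \<longrightarrow> b powr p \<le> (c * a) powr p \<and> (C * a) powr p \<le> b powr p)"
  proof (cases "a = 0")
    case False
    then have "0 < c * a"
      using a c by simp
    then have "0 < b"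
      using lower by linarith
    then show ?thesis
      using \<open>0 < c * a\<close> lower upper by (auto intro: powr_mono2 powr_mono2')
  qed (use lower upper in simp)
  then show "0 \<le> p \<Longrightarrow> c powr p * a powr p \<le> b powr p \<and> b powr p \<le> C powr p * a powr p"
    and "p \<le> 0 \<Longrightarrow> b powr p \<le> c powr p * a powr p \<and> C powr p * a powr p \<le> b powr p"
    using c a upper by (simp_all add: powr_mult)
qed

lemma renyi_igf_bounds:
  fixes f g :: "real \<Rightarrow> real" and c C \<alpha> \<beta> :: real
  assumes c: "0 < c" and \<alpha>: "\<alpha> \<noteq> 1"
    and int_f: "set_integrable lborel {0..} (\<lambda>x. f x powr \<alpha>)"
    and int_g: "set_integrable lborel {0..} (\<lambda>x. g x powr \<alpha>)"
    and bounds: "AE x in lborel. c * f x powr \<alpha> \<le> g x powr \<alpha> \<and> g x powr \<alpha> \<le> C * f x powr \<alpha>"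
  shows "(((1 < \<alpha> \<and> \<beta> \<le> 1) \<or> (\<alpha> < 1 \<and> 1 \<le> \<beta>)) \<longrightarrow>
           c powr (\<beta> - 1) * renyi_igf \<alpha> \<beta> f \<le> renyi_igf \<alpha> \<beta> g
         \<and> renyi_igf \<alpha> \<beta> g \<le> C powr (\<beta> - 1) * renyi_igf \<alpha> \<beta> f)
       \<and> (((1 < \<alpha> \<and> 1 \<le> \<beta>) \<or> (\<alpha> < 1 \<and> \<beta> \<le> 1)) \<longrightarrow>
           c powr (\<beta> - 1) * renyi_igf \<alpha> \<beta> f \<ge> renyi_igf \<alpha> \<beta> g
         \<and> renyi_igf \<alpha> \<beta> g \<ge> C powr (\<beta> - 1) * renyi_igf \<alpha> \<beta> f)"
proof -
  define I where "I = (LBINT x:{0..}. f x powr \<alpha>)"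
  define J where "J = (LBINT x:{0..}. g x powr \<alpha>)"
  have "(LBINT x:{0..}. c * f x powr \<alpha>) \<le> J"
    unfolding J_def using int_f int_g bounds
    by (intro set_integral_mono_AE) (auto elim: AE_mp)
  moreover have "J \<le> (LBINT x:{0..}. C * f x powr \<alpha>)"
    unfolding J_def using int_f int_g bounds
    by (intro set_integral_mono_AE) (auto elim: AE_mp)
  ultimately have "c * I \<le> J" "J \<le> C * I"
    by (simp_all add: I_def)
  moreover have "0 \<le> I"
    unfolding I_def set_lebesgue_integral_def by (intro integral_nonneg_AE AE_I2) (simp add: indicator_def)
  ultimately have inc: "\<beta> - 1 \<ge> 0 \<Longrightarrow> c powr (\<beta> - 1) * I powr (\<beta> - 1) \<le> J powr (\<beta> - 1) \<and>
        J powr (\<beta> - 1) \<le> C powr (\<beta> - 1) * I powr (\<beta> - 1)"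
    and dec: "\<beta> - 1 \<le> 0 \<Longrightarrow> J powr (\<beta> - 1) \<le> c powr (\<beta> - 1) * I powr (\<beta> - 1) \<and>
        C powr (\<beta> - 1) * I powr (\<beta> - 1) \<le> J powr (\<beta> - 1)"
    using powr_mult_bounds[OF c] by blast+
  define k where "k = 1 / (1 - \<alpha>)"
  have k: "1 < \<alpha> \<Longrightarrow> k \<le> 0" "\<alpha> < 1 \<Longrightarrow> 0 \<le> k"
    by (simp_all add: k_def)
  define lo mid hi where "lo = c powr (\<beta> - 1) * I powr (\<beta> - 1)"
    and "mid = J powr (\<beta> - 1)" and "hi = C powr (\<beta> - 1) * I powr (\<beta> - 1)"
  have "c powr (\<beta> - 1) * renyi_igf \<alpha> \<beta> f = k * lo" "renyi_igf \<alpha> \<beta> g = k * mid"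
    "C powr (\<beta> - 1) * renyi_igf \<alpha> \<beta> f = k * hi"
    by (simp_all add: renyi_igf_def k_def lo_def mid_def hi_def I_def J_def)
  then show ?thesis
    using inc dec k
    unfolding lo_def[symmetric] mid_def[symmetric] hi_def[symmetric]
    by (auto intro: mult_left_mono mult_left_mono_neg)
qed

text \<open>The paper's \<open>\<phi>\<^sub>\<alpha>\<close> is \<open>density_quantile \<alpha> f F\<close>, and \<open>\<psi>\<^sub>\<alpha>\<close> is
  \<open>density_quantile \<alpha> f\<^sub>T F\<^sub>T\<close>.\<close>

definition density_quantile :: "real \<Rightarrow> (real \<Rightarrow> real) \<Rightarrow> (real \<Rightarrow> real) \<Rightarrow> real \<Rightarrow> real" where
  "density_quantile \<alpha> h H u = h (quantile H u) powr \<alpha>"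

context
  fixes F f q q' :: "real \<Rightarrow> real" and \<alpha> :: real
  assumes q: "distortion q q'" and F_range: "\<And>x. F x \<in> {0..1}"
    and f_nonneg: "\<And>x. 0 \<le> f x" and \<alpha>: "0 < \<alpha>"
begin

lemma distortion_deriv_ge_if_ratio_ge:
  assumes F_quantile: "\<And>u. u \<in> {0<..<1} \<Longrightarrow> F (quantile F u) = u"
    and c: "0 < c"
    and ratio_ge: "\<And>u. u \<in> {0<..<1} \<Longrightarrow>
      c \<le> density_quantile \<alpha> (\<lambda>x. q' (F x) * f x) (\<lambda>x. q (F x)) (q u) / density_quantile \<alpha> f F u"
    and t: "0 < t" "t < 1" and less: "\<forall>s\<in>{0..<t}. q s < q t"
  shows "c powr (1 / \<alpha>) \<le> q' t"
proof -
  define x where "x = quantile F t"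
  have "F x = t"
    using F_quantile t by (simp add: x_def)
  have "quantile (\<lambda>x. q (F x)) (q t) = x"
    unfolding x_def using q F_range t less
    by (intro quantile_comp_eq) (auto simp: distortion_def)
  then have ratio: "c \<le> (q' t * f x) powr \<alpha> / f x powr \<alpha>"
    using ratio_ge[of t] t by (simp add: density_quantile_def \<open>F x = t\<close> flip: x_def)
  then have "0 < f x"
    using c f_nonneg[of x] by (cases "f x = 0") auto
  then have "c \<le> q' t powr \<alpha>"
    using ratio distortion_deriv_nonneg[OF q t] by (simp add: powr_mult)
  then have "c powr (1 / \<alpha>) \<le> (q' t powr \<alpha>) powr (1 / \<alpha>)"
    using c \<alpha> by (intro powr_mono2) auto
  also have "\<dots> = q' t"
    using \<alpha> distortion_deriv_nonneg[OF q t] by (simp add: powr_powr)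
  finally show ?thesis .
qed

lemma distortion_strict_mono_if_ratio_ge:
  assumes F_quantile: "\<And>u. u \<in> {0<..<1} \<Longrightarrow> F (quantile F u) = u"
    and c: "0 < c"
    and ratio_ge: "\<And>u. u \<in> {0<..<1} \<Longrightarrow>
      c \<le> density_quantile \<alpha> (\<lambda>x. q' (F x) * f x) (\<lambda>x. q (F x)) (q u) / density_quantile \<alpha> f F u"
  shows "strict_mono_on {0..1} q"
proof (rule distortion_strict_mono_on[OF q])
  show "0 < c powr (1 / \<alpha>)"
    using c by simp
  show "c powr (1 / \<alpha>) \<le> q' t" if "0 < t" "t < 1" "\<forall>s\<in>{0..<t}. q s < q t" for t
    by (rule distortion_deriv_ge_if_ratio_ge[OF F_quantile c ratio_ge that])
qed

lemma distorted_density_powr_bounds: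
  assumes strict: "strict_mono_on {0..1} q"
    and F_strict: "0 < f x \<Longrightarrow> (\<forall>y<x. F y < F x) \<and> (\<forall>z>x. F x < F z)"
    and ratio_bounds: "\<And>u. u \<in> {0<..<1} \<Longrightarrow>
      c \<le> density_quantile \<alpha> (\<lambda>x. q' (F x) * f x) (\<lambda>x. q (F x)) (q u) / density_quantile \<alpha> f F u \<and>
      density_quantile \<alpha> (\<lambda>x. q' (F x) * f x) (\<lambda>x. q (F x)) (q u) / density_quantile \<alpha> f F u \<le> C"
  shows "c * f x powr \<alpha> \<le> (q' (F x) * f x) powr \<alpha> \<and> (q' (F x) * f x) powr \<alpha> \<le> C * f x powr \<alpha>"
proof (cases "f x = 0")
  case False
  then have "0 < f x"
    using f_nonneg[of x] by simp
  with F_strict have left: "\<And>y. y < x \<Longrightarrow> F y < F x" and right: "\<And>z. x < z \<Longrightarrow> F x < F z"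
    by auto
  have "F x \<in> {0<..<1}"
    using left[of "x - 1"] right[of "x + 1"] F_range[of "x - 1"] F_range[of "x + 1"] by auto
  moreover have "quantile F (F x) = x"
    using left by (rule quantile_eq_if_less_left)
  moreover have "quantile (\<lambda>x. q (F x)) (q (F x)) = quantile F (F x)"
  proof (rule quantile_comp_eq)
    show "q s < q (F x)" if "s \<in> {0..<F x}" for s
      using that F_range[of x] by (intro strict_mono_onD[OF strict]) auto
  qed (use q F_range in \<open>auto simp: distortion_def\<close>)
  ultimately have "c \<le> (q' (F x) * f x) powr \<alpha> / f x powr \<alpha>"
    and "(q' (F x) * f x) powr \<alpha> / f x powr \<alpha> \<le> C"
    using ratio_bounds[of "F x"] by (simp_all add: density_quantile_def)
  then show ?thesis
    using \<open>0 < f x\<close> by (simp add: pos_le_divide_eq pos_divide_le_eq)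
qed simp


end

theorem proposition6p3:
  fixes M :: "'a measure" and X T :: "'a \<Rightarrow> real"
    and f fT F FT q q' :: "real \<Rightarrow> real" and \<alpha> \<beta> :: real
  assumes M: "prob_space M"
    and X_nonneg: "AE \<omega> in M. 0 \<le> X \<omega>"
    and f_nonneg: "\<And>x. 0 \<le> f x"
    and X_distr: "distributed M lborel X (\<lambda>x. ennreal (f x))"
    and F_def: "F = cdf (distr M lborel X)"
    and q: "distortion q q'"
    and FT_def: "FT = (\<lambda>x. q (F x))"
    and fT_def: "fT = (\<lambda>x. q' (F x) * f x)"
    and T_cdf: "cdf (distr M lborel T) = FT"
    and T_distr: "distributed M lborel T (\<lambda>x. ennreal (fT x))"
    and \<alpha>: "0 < \<alpha>" "\<alpha> \<noteq> 1" and \<beta>: "0 < \<beta>"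
    and int_X: "set_integrable lborel {0..} (\<lambda>x. f x powr \<alpha>)"
    and int_T: "set_integrable lborel {0..} (\<lambda>x. fT x powr \<alpha>)"
    and bdd_below: "bdd_below ((\<lambda>u. fT (quantile FT (q u)) powr \<alpha> / f (quantile F u) powr \<alpha>) ` {0<..<1})"
    and bdd_above: "bdd_above ((\<lambda>u. fT (quantile FT (q u)) powr \<alpha> / f (quantile F u) powr \<alpha>) ` {0<..<1})"
    and inf_pos: "0 < (INF u\<in>{0<..<1}. fT (quantile FT (q u)) powr \<alpha> / f (quantile F u) powr \<alpha>)"
  shows "(((1 < \<alpha> \<and> \<beta> \<le> 1) \<or> (\<alpha> < 1 \<and> 1 \<le> \<beta>)) \<longrightarrow>
           (INF u\<in>{0<..<1}. fT (quantile FT (q u)) powr \<alpha> / f (quantile F u) powr \<alpha>) powr (\<beta> - 1)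
              * renyi_igf \<alpha> \<beta> f \<le> renyi_igf \<alpha> \<beta> fT
         \<and> renyi_igf \<alpha> \<beta> fT \<le>
           (SUP u\<in>{0<..<1}. fT (quantile FT (q u)) powr \<alpha> / f (quantile F u) powr \<alpha>) powr (\<beta> - 1)
              * renyi_igf \<alpha> \<beta> f)
       \<and> (((1 < \<alpha> \<and> 1 \<le> \<beta>) \<or> (\<alpha> < 1 \<and> \<beta> \<le> 1)) \<longrightarrow>
           (INF u\<in>{0<..<1}. fT (quantile FT (q u)) powr \<alpha> / f (quantile F u) powr \<alpha>) powr (\<beta> - 1)
              * renyi_igf \<alpha> \<beta> f \<ge> renyi_igf \<alpha> \<beta> fT
         \<and> renyi_igf \<alpha> \<beta> fT \<ge>
           (SUP u\<in>{0<..<1}. fT (quantile FT (q u)) powr \<alpha> / f (quantile F u) powr \<alpha>) powr (\<beta> - 1)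
              * renyi_igf \<alpha> \<beta> f)"
proof -
  interpret prob_space M
    by (rule M)
  interpret X: real_distribution "distr M lborel X"
    using X_distr by (rule distributed_real_distribution)
  have F_range: "F x \<in> {0..1}" for x
    by (simp add: F_def X.cdf_nonneg X.cdf_bounded_prob)
  have F_quantile: "F (quantile F u) = u" if "u \<in> {0<..<1}" for u
    using distributed_cdf_quantile[OF X_distr] that by (simp add: F_def)
  define ratio where "ratio u = density_quantile \<alpha> fT FT (q u) / density_quantile \<alpha> f F u" for u
  define c C where "c = (INF u\<in>{0<..<1}. ratio u)" and "C = (SUP u\<in>{0<..<1}. ratio u)"
  have ratio_bounds: "c \<le> ratio u \<and> ratio u \<le> C" if "u \<in> {0<..<1}" for u
    using cINF_lower[OF bdd_below that] cSUP_upper[OF that bdd_above]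
    by (simp add: c_def C_def ratio_def density_quantile_def)
  have "0 < c"
    using inf_pos by (simp add: c_def ratio_def density_quantile_def)
  have "strict_mono_on {0..1} q"
    using ratio_bounds
    by (intro distortion_strict_mono_if_ratio_ge[where f = f, OF q F_range f_nonneg \<alpha>(1)
          F_quantile \<open>0 < c\<close>])
      (auto simp: ratio_def FT_def fT_def)
  have "AE x in lborel. c * f x powr \<alpha> \<le> fT x powr \<alpha> \<and> fT x powr \<alpha> \<le> C * f x powr \<alpha>"
    using distributed_AE_cdf_strict_at[OF X_distr]
  proof eventually_elim
    case (elim x)
    show ?case
      using ratio_bounds elim unfolding fT_def
      by (intro distorted_density_powr_bounds[where f = f, OF q F_range f_nonneg \<alpha>(1)
            \<open>strict_mono_on {0..1} q\<close>])
        (auto simp: ratio_def FT_def fT_def F_def)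
  qed
  from renyi_igf_bounds[OF \<open>0 < c\<close> \<alpha>(2) int_X int_T this] show ?thesis
    unfolding c_def C_def ratio_def density_quantile_def .
qed

end
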